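(* Let $k\ge1$, $G=(V,E)$ an inductively $k$-independent graph with $k$-independence ordering $v_1,\dots,v_n$, $f:2^V\to\mathbb{R}_{\ge0}$ monotone submodular with $f(\emptyset)=0$, and $\beta>0$. Let $S_{\mathrm{end}}$ and $w_1,\dots,w_n$ be produced by Phase 1 of algorithm PD-MON (described in the context). Then \[ f(S_{\mathrm{end}})\le\frac{1+\beta}{\beta}\sum_{i=1}^n w_i. \]
   Context: $N(v)$ is the neighbourhood of $v$ (excluding $v$); $G$ is inductively $k$-independent with $k$-independence ordering $v_1,\dots,v_n$ if for every $i$, $G[N(v_i)\cap\{v_i,\dots,v_n\}]$ has no independent set of size more than $k$. For $S\subseteq V$, $f_S(v)=f(S\cup\{v\})-f(S)$. Phase 1 of algorithm PD-MON (parameter $\beta>0$): start with $S=\emptyset$ and $w_1=\dots=w_n=0$. For $i=1,\dots,n$: let $C_i=N(v_i)\cap S$ for the current $S$; if $f_S(v_i)>(1+\beta)\sum_{v_j\in C_i}w_j$, set $w_i=f_S(v_i)-\sum_{v_j\in C_i}w_j$ (with $S$ the set before insertion) and add $v_i$ to $S$; otherwise leave $w_i=0$. $S_{\mathrm{end}}$ is $S$ at the end of this phase. *)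

theory Defs
  imports Complex_Main
begin

definition neighbourhood :: "'a set \<Rightarrow> ('a \<Rightarrow> 'a \<Rightarrow> bool) \<Rightarrow> 'a \<Rightarrow> 'a set" where
  "neighbourhood V E v = {u \<in> V. E v u \<and> u \<noteq> v}"

definition independent_set :: "('a \<Rightarrow> 'a \<Rightarrow> bool) \<Rightarrow> 'a set \<Rightarrow> bool" where
  "independent_set E I \<longleftrightarrow> (\<forall>u\<in>I. \<forall>v\<in>I. u \<noteq> v \<longrightarrow> \<not> E u v)"

definition k_independence_ordering :: "nat \<Rightarrow> ('a \<Rightarrow> 'a \<Rightarrow> bool) \<Rightarrow> 'a list \<Rightarrow> bool" where
  "k_independence_ordering k E vs \<longleftrightarrow>
     distinct vs \<and>
     (\<forall>i < length vs. \<forall>I. I \<subseteq> neighbourhood (set vs) E (vs ! i) \<inter> set (drop i vs)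
          \<longrightarrow> independent_set E I \<longrightarrow> card I \<le> k)"

text \<open>One step of Phase 1 of PD-MON, processing vertex number i; the state is (S, w),
  with w indexed by vertex positions.\<close>
definition pdmon_step :: "('a set \<Rightarrow> real) \<Rightarrow> ('a \<Rightarrow> 'a \<Rightarrow> bool) \<Rightarrow> real \<Rightarrow> 'a list
    \<Rightarrow> 'a set \<times> (nat \<Rightarrow> real) \<Rightarrow> nat \<Rightarrow> 'a set \<times> (nat \<Rightarrow> real)" where
  "pdmon_step f E \<beta> vs st i =
     (let S = fst st; w = snd st; v = vs ! i;
          C = {j. j < length vs \<and> vs ! j \<in> neighbourhood (set vs) E v \<inter> S};
          m = f (S \<union> {v}) - f S;
          c = (\<Sum>j\<in>C. w j)
      in if m > (1 + \<beta>) * c then (S \<union> {v}, w(i := m - c)) else (S, w))"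

definition pdmon_phase1 :: "('a set \<Rightarrow> real) \<Rightarrow> ('a \<Rightarrow> 'a \<Rightarrow> bool) \<Rightarrow> real \<Rightarrow> 'a list
    \<Rightarrow> 'a set \<times> (nat \<Rightarrow> real)" where
  "pdmon_phase1 f E \<beta> vs = foldl (pdmon_step f E \<beta> vs) ({}, (\<lambda>_. 0)) [0..<length vs]"

end

theory Submission
  imports Defs
begin

text \<open>Every vertex v accepted in Phase 1 raises f by its marginal gain m, and is accepted only
  if m > (1 + \<beta>) c, where its weight is m - c; hence m \<le> (1 + \<beta>) / \<beta> (m - c).
  Summing over the accepted vertices gives the bound.\<close>

definition pdmon_state :: "('a set \<Rightarrow> real) \<Rightarrow> ('a \<Rightarrow> 'a \<Rightarrow> bool) \<Rightarrow> real \<Rightarrow> 'a list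
    \<Rightarrow> nat \<Rightarrow> 'a set \<times> (nat \<Rightarrow> real)" where
  "pdmon_state f E \<beta> vs j = foldl (pdmon_step f E \<beta> vs) ({}, (\<lambda>_. 0)) [0..<j]"

lemma pdmon_state_0 [simp]: "pdmon_state f E \<beta> vs 0 = ({}, (\<lambda>_. 0))"
  by (simp add: pdmon_state_def)

lemma pdmon_state_Suc [simp]:
  "pdmon_state f E \<beta> vs (Suc j) = pdmon_step f E \<beta> vs (pdmon_state f E \<beta> vs j) j"
  by (simp add: pdmon_state_def)

lemma pdmon_phase1_eq_pdmon_state: "pdmon_phase1 f E \<beta> vs = pdmon_state f E \<beta> vs (length vs)"
  by (simp add: pdmon_phase1_def pdmon_state_def)

lemma gain_le_scaled_residual:
  fixes m c \<beta> :: real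
  assumes "\<beta> > 0" and "m > (1 + \<beta>) * c"
  shows "m \<le> (1 + \<beta>) / \<beta> * (m - c)"
proof -
  have "\<beta> * m \<le> (1 + \<beta>) * (m - c)"
    using assms by (simp add: algebra_simps)
  then show ?thesis
    using assms(1) by (simp add: field_simps)
qed

lemma pdmon_step_weight_other:
  "i \<noteq> j \<Longrightarrow> snd (pdmon_step f E \<beta> vs st j) i = snd st i"
  by (simp add: pdmon_step_def Let_def)

lemma pdmon_step_gain:
  assumes "\<beta> > 0" and "snd st j = 0"
  shows "f (fst (pdmon_step f E \<beta> vs st j))
           \<le> f (fst st) + (1 + \<beta>) / \<beta> * snd (pdmon_step f E \<beta> vs st j) j"
proof -
  obtain S w where st: "st = (S, w)"
    by fastforce
  define v where "v = vs ! j"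
  define m where "m = f (S \<union> {v}) - f S"
  define c where "c = (\<Sum>i | i < length vs \<and> vs ! i \<in> neighbourhood (set vs) E v \<inter> S. w i)"
  have step: "pdmon_step f E \<beta> vs (S, w) j
      = (if m > (1 + \<beta>) * c then (S \<union> {v}, w(j := m - c)) else (S, w))"
    by (simp add: pdmon_step_def v_def m_def c_def Let_def)
  show ?thesis
  proof (cases "m > (1 + \<beta>) * c")
    case True
    then have "m \<le> (1 + \<beta>) / \<beta> * (m - c)"
      using gain_le_scaled_residual assms(1) by blast
    then show ?thesis
      using True by (simp add: st step m_def)
  next
    case False
    then show ?thesis
      using assms(2) by (simp add: step st)
  qed
qed

lemma pdmon_state_weight_unprocessed:
  "j \<le> i \<Longrightarrow> snd (pdmon_state f E \<beta> vs j) i = 0"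
  by (induction j) (simp_all add: pdmon_step_weight_other)

lemma pdmon_state_value_le:
  fixes f :: "'a set \<Rightarrow> real"
  assumes "f {} = 0" and "\<beta> > 0"
  shows "f (fst (pdmon_state f E \<beta> vs j))
           \<le> (1 + \<beta>) / \<beta> * (\<Sum>i<j. snd (pdmon_state f E \<beta> vs j) i)"
proof (induction j)
  case 0
  then show ?case
    using assms(1) by simp
next
  case (Suc j)
  let ?st = "pdmon_state f E \<beta> vs j"
  let ?st' = "pdmon_state f E \<beta> vs (Suc j)"
  have old_weights: "(\<Sum>i<j. snd ?st' i) = (\<Sum>i<j. snd ?st i)"
    by (intro sum.cong) (simp_all add: pdmon_step_weight_other)
  have "f (fst ?st') \<le> f (fst ?st) + (1 + \<beta>) / \<beta> * snd ?st' j"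
    using pdmon_step_gain[OF assms(2) pdmon_state_weight_unprocessed[OF order_refl]] by simp
  also have "\<dots> \<le> (1 + \<beta>) / \<beta> * (\<Sum>i<j. snd ?st i) + (1 + \<beta>) / \<beta> * snd ?st' j"
    using Suc.IH by simp
  also have "\<dots> = (1 + \<beta>) / \<beta> * (\<Sum>i<Suc j. snd ?st' i)"
    by (simp only: sum.lessThan_Suc old_weights distrib_left)
  finally show ?case .
qed

theorem lemma4:
  fixes k :: nat and E :: "'a \<Rightarrow> 'a \<Rightarrow> bool" and vs :: "'a list"
    and f :: "'a set \<Rightarrow> real" and \<beta> :: real
  assumes "k \<ge> 1"
    and "\<And>u v. E u v \<Longrightarrow> E v u"
    and "\<And>v. \<not> E v v"
    and "k_independence_ordering k E vs"
    and "\<And>A. A \<subseteq> set vs \<Longrightarrow> f A \<ge> 0"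
    and "f {} = 0"
    and "\<And>A B. A \<subseteq> B \<Longrightarrow> B \<subseteq> set vs \<Longrightarrow> f A \<le> f B"
    and "\<And>A B. A \<subseteq> set vs \<Longrightarrow> B \<subseteq> set vs \<Longrightarrow> f (A \<union> B) + f (A \<inter> B) \<le> f A + f B"
    and "\<beta> > 0"
  shows "f (fst (pdmon_phase1 f E \<beta> vs))
           \<le> (1 + \<beta>) / \<beta> * (\<Sum>i<length vs. snd (pdmon_phase1 f E \<beta> vs) i)"
  unfolding pdmon_phase1_eq_pdmon_state
  using pdmon_state_value_le[where f = f and \<beta> = \<beta>, OF assms(6) assms(9)] .

end
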